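(* The functions $R_F(x,y,z)$, $R_D(x,y,z)$, $R_J(x,y,z,p)$ and $(xyz)^{-1/2}$ are linearly independent with respect to coefficients that are rational functions of $x,y,z,p$. That is, if $\alpha,\beta,\gamma,\delta$ are rational functions of $x,y,z,p$ such that $$\alpha\, R_F(x,y,z)+\beta\, R_D(x,y,z)+\gamma\, R_J(x,y,z,p)+\delta\,(xyz)^{-1/2}\equiv 0$$ identically in the variables, then $\alpha,\beta,\gamma,\delta$ are all identically $0$.
   Context: For $x,y,z\ge 0$ with at most one of them zero, and $p>0$: $R_F(x,y,z)=\frac12\int_0^\infty[(t+x)(t+y)(t+z)]^{-1/2}\,dt$; $R_J(x,y,z,p)=\frac32\int_0^\infty[(t+x)(t+y)(t+z)]^{-1/2}(t+p)^{-1}\,dt$; $R_D(x,y,z)=R_J(x,y,z,z)=\frac32\int_0^\infty[(t+x)(t+y)]^{-1/2}(t+z)^{-3/2}\,dt$ (for $z>0$). *)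

theory Defs
  imports "HOL-Analysis.Analysis"
begin

definition RF :: "real \<Rightarrow> real \<Rightarrow> real \<Rightarrow> real" where
  "RF x y z = 1/2 * integral {0..} (\<lambda>t. 1 / sqrt ((t + x) * (t + y) * (t + z)))"

definition RJ :: "real \<Rightarrow> real \<Rightarrow> real \<Rightarrow> real \<Rightarrow> real" where
  "RJ x y z p = 3/2 * integral {0..} (\<lambda>t. 1 / (sqrt ((t + x) * (t + y) * (t + z)) * (t + p)))"

definition RD :: "real \<Rightarrow> real \<Rightarrow> real \<Rightarrow> real" where
  "RD x y z = RJ x y z z"

text \<open>Real polynomials in four variables x,y,z,p, represented by their coefficient
  function on exponent tuples (finitely supported).\<close>

type_synonym poly4 = "nat \<times> nat \<times> nat \<times> nat \<Rightarrow> real"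

definition is_poly4 :: "poly4 \<Rightarrow> bool" where
  "is_poly4 c \<longleftrightarrow> finite {m. c m \<noteq> 0}"

definition eval4 :: "poly4 \<Rightarrow> real \<Rightarrow> real \<Rightarrow> real \<Rightarrow> real \<Rightarrow> real" where
  "eval4 c x y z p =
     (\<Sum>m\<in>{m. c m \<noteq> 0}. (case m of (a, b, d, e) \<Rightarrow> c m * x ^ a * y ^ b * z ^ d * p ^ e))"

text \<open>A rational function is a quotient P/Q of such polynomials with Q not the zero
  polynomial; it is identically zero iff P is the zero polynomial.\<close>

definition rat4 :: "poly4 \<Rightarrow> poly4 \<Rightarrow> real \<Rightarrow> real \<Rightarrow> real \<Rightarrow> real \<Rightarrow> real" where
  "rat4 P Q x y z p = eval4 P x y z p / eval4 Q x y z p"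

end

theory Submission
  imports Defs "HOL-Real_Asymp.Real_Asymp" "HOL-Computational_Algebra.Polynomial"
begin

text \<open>Fix x, y, z in general position and let p tend to 0: RJ x y z p grows like ln (1 / p) while
  p * RJ x y z p tends to 0, which no rational function of p can match, so the coefficient of RJ
  vanishes. Next put x = e * a, z = e * c and let e tend to 0: RF grows like ln (1 / e), while
  e * RD tends to 3 / (sqrt y * sqrt c * (sqrt a + sqrt c)) and e / sqrt (x * y * z) = 1 / sqrt (a * y * c).
  After clearing denominators, the leading coefficients in e of the RD-term and of the
  (x * y * z) powr (-1/2)-term are the values B and D of lowest-degree parts in (x, z), and they must
  satisfy 3 * B * sqrt a + D * (sqrt a + sqrt c) = 0, i.e. c * D^2 = a * (3 * B + D)^2. As polynomials
  in c the two sides have degrees of different parity, so D = 0, and then B = 0. Finally RF > 0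
  forces the coefficient of RF to vanish.\<close>

section \<open>Integral bounds for RF, RJ and RD\<close>

lemma has_integral_Ici_antiderivative:
  fixes f F :: "real \<Rightarrow> real"
  assumes deriv: "\<And>t. t \<ge> a \<Longrightarrow> (F has_real_derivative f t) (at t)"
    and nonneg: "\<And>t. t \<ge> a \<Longrightarrow> f t \<ge> 0"
    and lim: "(F \<longlongrightarrow> L) at_top"
  shows "(f has_integral (L - F a)) {a..}"
proof -
  have ftc: "(f has_integral (F y - F a)) {a..y}" if "y \<ge> a" for y
    using that deriv
    by (intro fundamental_theorem_of_calculus)
       (auto simp flip: has_real_derivative_iff_has_vector_derivative intro: has_field_derivative_at_within)
  show ?thesis
  proof (rule has_integral_to_inf)
    show "f integrable_on {a..y}" for y
      using ftc[of y] by (cases "a \<le> y") auto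
    have "\<forall>\<^sub>F y in at_top. F y - F a = integral {a..y} f"
      using ftc by (intro eventually_at_top_linorderI[of a]) (metis integral_unique)
    then show "((\<lambda>y. integral {a..y} f) \<longlongrightarrow> L - F a) at_top"
      by (rule Lim_transform_eventually[OF tendsto_diff[OF lim tendsto_const]])
  qed (use nonneg in auto)
qed

lemma has_integral_inverse_pow_three_halves:
  fixes k :: real
  assumes "k > 0"
  shows "((\<lambda>t. 1 / ((t + k) * sqrt (t + k))) has_integral 2 / sqrt k) {0..}"
proof -
  have "((\<lambda>t. 1 / ((t + k) * sqrt (t + k))) has_integral 0 - (- 2 / sqrt (0 + k))) {0..}"
  proof (rule has_integral_Ici_antiderivative)
    show "((\<lambda>t. - 2 / sqrt (t + k)) has_real_derivative 1 / ((t + k) * sqrt (t + k))) (at t)"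
      if "t \<ge> 0" for t
      using that assms by (auto intro!: derivative_eq_intros simp: field_simps)
    show "((\<lambda>t. - 2 / sqrt (t + k)) \<longlongrightarrow> 0) at_top"
      by real_asymp
  qed (use assms in auto)
  then show ?thesis by simp
qed

lemma has_integral_RD_without_y:
  fixes a c :: real
  assumes "a > 0" "c > 0"
  shows "((\<lambda>t. 1 / (sqrt (t + a) * sqrt (t + c) * (t + c))) has_integral
           2 / (sqrt c * (sqrt a + sqrt c))) {0..}"
proof -
  define F where "F t = - 2 / (sqrt (t + c) * (sqrt (t + a) + sqrt (t + c)))" for t
  have "((\<lambda>t. 1 / (sqrt (t + a) * sqrt (t + c) * (t + c))) has_integral 0 - F 0) {0..}"
  proof (rule has_integral_Ici_antiderivative)
    fix t :: real
    assume "t \<ge> 0"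
    have quotient_rule_result:
      "- ((- (inverse v * (u + v)) - 2 * ((inverse u / 2 + inverse v / 2) * v)) / (v * (u + v) * (v * (u + v))))
         = 1 / (u * v * (v * v))" if "u > 0" "v > 0" for u v :: real
      using that by (simp add: divide_simps) (simp add: algebra_simps)
    show "(F has_real_derivative 1 / (sqrt (t + a) * sqrt (t + c) * (t + c))) (at t)"
      unfolding F_def using \<open>t \<ge> 0\<close> assms quotient_rule_result[of "sqrt (t + a)" "sqrt (t + c)"]
      by (auto intro!: derivative_eq_intros simp: add_pos_pos)
  next
    show "(F \<longlongrightarrow> 0) at_top"
      unfolding F_def by real_asymp
  qed (use assms in auto)
  then show ?thesis by (simp add: F_def)
qed

lemma has_integral_inverse_shift_unit_interval:
  fixes k :: real
  assumes "k > 0"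
  shows "((\<lambda>t. 1 / (t + k)) has_integral (ln (1 + k) - ln k)) {0..1}"
proof -
  have "((\<lambda>t. 1 / (t + k)) has_integral (ln (1 + k) - ln (0 + k))) {0..1}"
    using assms
    by (intro fundamental_theorem_of_calculus)
       (auto intro!: derivative_eq_intros simp flip: has_real_derivative_iff_has_vector_derivative
             simp: field_simps)
  then show ?thesis by simp
qed

lemma integrable_continuous_dominated:
  fixes f g :: "real \<Rightarrow> real"
  assumes "continuous_on S f" "closed S" "g integrable_on S" "\<And>t. t \<in> S \<Longrightarrow> \<bar>f t\<bar> \<le> g t"
  shows "f integrable_on S"
  by (rule measurable_bounded_by_integrable_imp_integrable_real)
     (use assms in \<open>auto intro: continuous_imp_measurable_on_sets_lebesgue\<close>)

lemma RF_integrand_le: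
  fixes t m x y z :: real
  assumes "t \<ge> 0" "m > 0" "m \<le> x" "m \<le> y" "m \<le> z"
  shows "1 / sqrt ((t + x) * (t + y) * (t + z)) \<le> 1 / ((t + m) * sqrt (t + m))"
proof -
  have "(t + m) * sqrt (t + m) = sqrt ((t + m) * (t + m) * (t + m))"
    using assms by (simp add: real_sqrt_mult)
  also have "\<dots> \<le> sqrt ((t + x) * (t + y) * (t + z))"
    using assms by (intro real_sqrt_le_mono mult_mono) auto
  finally show ?thesis
    using assms by (intro divide_left_mono) auto
qed

lemma RF_integrable:
  fixes x y z :: real
  assumes "x > 0" "y > 0" "z > 0"
  shows "(\<lambda>t. 1 / sqrt ((t + x) * (t + y) * (t + z))) integrable_on {0..}"
proof (rule integrable_continuous_dominated)
  define m where "m = min x (min y z)"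
  have m: "m > 0" "m \<le> x" "m \<le> y" "m \<le> z"
    using assms by (auto simp: m_def)
  show "(\<lambda>t. 1 / ((t + m) * sqrt (t + m))) integrable_on {0..}"
    using has_integral_inverse_pow_three_halves[OF m(1)] by blast
  show "\<bar>1 / sqrt ((t + x) * (t + y) * (t + z))\<bar> \<le> 1 / ((t + m) * sqrt (t + m))" if "t \<in> {0..}" for t
    using RF_integrand_le[OF _ m] that assms by simp
qed (use assms in \<open>auto intro!: continuous_intros simp: add_pos_pos\<close>)

lemma RJ_integrable:
  fixes x y z p :: real
  assumes "x > 0" "y > 0" "z > 0" "p > 0"
  shows "(\<lambda>t. 1 / (sqrt ((t + x) * (t + y) * (t + z)) * (t + p))) integrable_on {0..}"
proof (rule integrable_continuous_dominated)
  show "(\<lambda>t. 1 / p * (1 / sqrt ((t + x) * (t + y) * (t + z)))) integrable_on {0..}"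
    using RF_integrable[OF assms(1-3)] by (rule integrable_on_mult_right)
  show "\<bar>1 / (sqrt ((t + x) * (t + y) * (t + z)) * (t + p))\<bar>
          \<le> 1 / p * (1 / sqrt ((t + x) * (t + y) * (t + z)))" if "t \<in> {0..}" for t
    using that assms by (simp add: divide_simps)
qed (use assms in \<open>auto intro!: continuous_intros simp: add_pos_pos\<close>)

lemma RF_le:
  fixes x y z m :: real
  assumes "m > 0" "m \<le> x" "m \<le> y" "m \<le> z"
  shows "RF x y z \<le> 1 / sqrt m"
proof -
  have "integral {0..} (\<lambda>t. 1 / sqrt ((t + x) * (t + y) * (t + z)))
          \<le> integral {0..} (\<lambda>t. 1 / ((t + m) * sqrt (t + m)))"
    using has_integral_inverse_pow_three_halves[OF assms(1)] assms
    by (intro integral_le RF_integrable RF_integrand_le) auto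
  also have "\<dots> = 2 / sqrt m"
    using has_integral_inverse_pow_three_halves[OF assms(1)] by (rule integral_unique)
  finally show ?thesis
    unfolding RF_def by simp
qed

lemma log_le_integral_Ici:
  fixes f :: "real \<Rightarrow> real"
  assumes integrable: "f integrable_on {0..}" and nonneg: "\<And>t. t \<ge> 0 \<Longrightarrow> f t \<ge> 0"
    and "M > 0" and lower: "\<And>t. t \<in> {0..1} \<Longrightarrow> k / (t + M) \<le> f t"
  shows "k * (ln (1 + M) - ln M) \<le> integral {0..} f"
proof -
  have log_integral: "((\<lambda>t. k / (t + M)) has_integral k * (ln (1 + M) - ln M)) {0..1}"
    using has_integral_mult_right[OF has_integral_inverse_shift_unit_interval[OF \<open>M > 0\<close>], of k]
    by simp
  have "k * (ln (1 + M) - ln M) \<le> integral {0..1} f"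
    using integral_le[OF has_integral_integrable[OF log_integral] _ lower]
      integrable_on_subinterval[OF integrable]
    unfolding integral_unique[OF log_integral] by auto
  also have "\<dots> \<le> integral {0..} f"
    by (intro integral_subset_le integrable integrable_on_subinterval[OF integrable]) (auto intro: nonneg)
  finally show ?thesis .
qed

lemma RF_ge:
  fixes x y z M :: real
  assumes "x > 0" "y > 0" "z > 0" "x \<le> M" "z \<le> M"
  shows "RF x y z \<ge> 1 / 2 * (1 / sqrt (1 + y) * (ln (1 + M) - ln M))"
proof -
  have "1 / sqrt (1 + y) * (ln (1 + M) - ln M)
          \<le> integral {0..} (\<lambda>t. 1 / sqrt ((t + x) * (t + y) * (t + z)))"
  proof (rule log_le_integral_Ici)
    fix t :: real
    assume t: "t \<in> {0..1}"
    have "sqrt ((t + x) * (t + y) * (t + z)) \<le> sqrt ((t + M) * (1 + y) * (t + M))"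
      using assms t by (intro real_sqrt_le_mono mult_mono) auto
    also have "\<dots> = (t + M) * sqrt (1 + y)"
      using assms t by (simp add: real_sqrt_mult)
    finally show "1 / sqrt (1 + y) / (t + M) \<le> 1 / sqrt ((t + x) * (t + y) * (t + z))"
      using assms t by (simp add: divide_simps mult.commute)
  qed (use assms RF_integrable in auto)
  then show ?thesis
    unfolding RF_def by (intro mult_left_mono) simp_all
qed

lemma RF_pos:
  fixes x y z :: real
  assumes "x > 0" "y > 0" "z > 0"
  shows "RF x y z > 0"
proof -
  have "0 < 1 / 2 * (1 / sqrt (1 + y) * (ln (1 + max x z) - ln (max x z)))"
    using assms by (simp add: max_def)
  also have "\<dots> \<le> RF x y z"
    using assms by (intro RF_ge) auto
  finally show ?thesis .
qed

lemma RJ_le: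
  fixes x y z p :: real
  assumes "x > 0" "y > 0" "z > 0" "p > 0" "p \<le> z"
  shows "RJ x y z p \<le> 3 / (sqrt x * sqrt y * sqrt p)"
proof -
  let ?g = "\<lambda>t. 1 / (sqrt x * sqrt y) * (1 / ((t + p) * sqrt (t + p)))"
  have g: "(?g has_integral 1 / (sqrt x * sqrt y) * (2 / sqrt p)) {0..}"
    using assms by (intro has_integral_mult_right has_integral_inverse_pow_three_halves)
  have "1 / (sqrt ((t + x) * (t + y) * (t + z)) * (t + p)) \<le> ?g t" if "t \<ge> 0" for t
  proof -
    have "sqrt x * sqrt y * sqrt (t + p) \<le> sqrt (t + x) * sqrt (t + y) * sqrt (t + z)"
      using assms that by (intro mult_mono) auto
    then have "sqrt x * sqrt y * ((t + p) * sqrt (t + p)) \<le> sqrt ((t + x) * (t + y) * (t + z)) * (t + p)"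
      using assms that mult_right_mono[of _ _ "t + p"] by (simp add: real_sqrt_mult ac_simps)
    then show ?thesis
      using assms that by (simp add: divide_simps)
  qed
  then have "integral {0..} (\<lambda>t. 1 / (sqrt ((t + x) * (t + y) * (t + z)) * (t + p)))
               \<le> integral {0..} ?g"
    using assms g by (intro integral_le RJ_integrable) auto
  then show ?thesis
    unfolding RJ_def integral_unique[OF g] by (simp add: field_simps)
qed

lemma RJ_ge:
  fixes x y z p :: real
  assumes "x > 0" "y > 0" "z > 0" "p > 0"
  shows "RJ x y z p \<ge> 3 / 2 * (1 / sqrt ((1 + x) * (1 + y) * (1 + z)) * (ln (1 + p) - ln p))"
proof -
  have "1 / sqrt ((1 + x) * (1 + y) * (1 + z)) * (ln (1 + p) - ln p)
          \<le> integral {0..} (\<lambda>t. 1 / (sqrt ((t + x) * (t + y) * (t + z)) * (t + p)))"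
  proof (rule log_le_integral_Ici)
    fix t :: real
    assume t: "t \<in> {0..1}"
    have "sqrt ((t + x) * (t + y) * (t + z)) \<le> sqrt ((1 + x) * (1 + y) * (1 + z))"
      using assms t by (intro real_sqrt_le_mono mult_mono) auto
    then have "1 / sqrt ((1 + x) * (1 + y) * (1 + z)) \<le> 1 / sqrt ((t + x) * (t + y) * (t + z))"
      using assms t by (intro divide_left_mono) (auto intro!: mult_pos_pos)
    then show "1 / sqrt ((1 + x) * (1 + y) * (1 + z)) / (t + p)
                 \<le> 1 / (sqrt ((t + x) * (t + y) * (t + z)) * (t + p))"
      using assms t by (simp add: divide_right_mono flip: divide_divide_eq_left)
  qed (use assms RJ_integrable in auto)
  then show ?thesis
    unfolding RJ_def by (intro mult_left_mono) simp_all
qed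

lemma RJ_pos:
  fixes x y z p :: real
  assumes "x > 0" "y > 0" "z > 0" "p > 0"
  shows "RJ x y z p > 0"
proof -
  have "0 < 3 / 2 * (1 / sqrt ((1 + x) * (1 + y) * (1 + z)) * (ln (1 + p) - ln p))"
    using assms by (simp add: add_pos_pos)
  with RJ_ge[OF assms] show ?thesis
    by linarith
qed

lemma inverse_sqrt_add_ge:
  fixes t y :: real
  assumes "t \<ge> 0" "y > 0"
  shows "1 / sqrt y - sqrt t / y \<le> 1 / sqrt (t + y)"
proof -
  define q r s where "q = sqrt t" and "r = sqrt y" and "s = sqrt (t + y)"
  have pos: "q \<ge> 0" "r > 0" "s > 0"
    using assms by (auto simp: q_def r_def s_def)
  have "s \<le> q + r"
    unfolding q_def r_def s_def using assms by (intro sqrt_add_le_add_sqrt) auto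
  have "s * (r - q) \<le> r * r"
  proof (cases "q \<le> r")
    case True
    then have "s * (r - q) \<le> (q + r) * (r - q)"
      using \<open>s \<le> q + r\<close> by (intro mult_right_mono) auto
    also have "\<dots> = r * r - q * q"
      by (simp add: algebra_simps)
    finally show ?thesis
      by (smt (verit) zero_le_square)
  next
    case False
    then have "s * (r - q) \<le> 0"
      using pos by (intro mult_nonneg_nonpos) auto
    then show ?thesis
      by (smt (verit) zero_le_square)
  qed
  then have "(r - q) / (r * r) \<le> 1 / s"
    using pos by (simp add: divide_simps mult.commute)
  moreover have "1 / r - q / (r * r) = (r - q) / (r * r)"
    using pos by (simp add: field_simps)
  ultimately have "1 / r - q / (r * r) \<le> 1 / s"
    by simp
  then show ?thesis
    using assms by (simp add: q_def r_def s_def)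
qed

lemma RD_le:
  fixes x y z :: real
  assumes "x > 0" "y > 0" "z > 0"
  shows "RD x y z \<le> 3 / (sqrt y * sqrt z * (sqrt x + sqrt z))"
proof -
  let ?g = "\<lambda>t. 1 / (sqrt (t + x) * sqrt (t + z) * (t + z))"
  have g: "((\<lambda>t. 1 / sqrt y * ?g t) has_integral 1 / sqrt y * (2 / (sqrt z * (sqrt x + sqrt z)))) {0..}"
    using assms by (intro has_integral_mult_right has_integral_RD_without_y)
  have "1 / (sqrt ((t + x) * (t + y) * (t + z)) * (t + z)) \<le> 1 / sqrt y * ?g t" if "t \<ge> 0" for t
  proof -
    have "1 / (sqrt ((t + x) * (t + y) * (t + z)) * (t + z))
            = 1 / (sqrt (t + x) * sqrt (t + z) * (t + z) * sqrt (t + y))"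
      by (simp add: real_sqrt_mult ac_simps)
    also have "\<dots> \<le> 1 / (sqrt (t + x) * sqrt (t + z) * (t + z) * sqrt y)"
      using assms that by (intro divide_left_mono mult_left_mono mult_pos_pos) auto
    also have "\<dots> = 1 / sqrt y * ?g t"
      by simp
    finally show ?thesis .
  qed
  then have "integral {0..} (\<lambda>t. 1 / (sqrt ((t + x) * (t + y) * (t + z)) * (t + z)))
               \<le> integral {0..} (\<lambda>t. 1 / sqrt y * ?g t)"
    using assms g by (intro integral_le RJ_integrable) auto
  then show ?thesis
    unfolding RD_def RJ_def integral_unique[OF g] by (simp add: field_simps)
qed

lemma RD_ge:
  fixes x y z :: real
  assumes "x > 0" "y > 0" "z > 0"
  shows "RD x y z \<ge> 3 / (sqrt y * sqrt z * (sqrt x + sqrt z)) - 3 / (y * sqrt z)"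
proof -
  let ?f = "\<lambda>t. 1 / (sqrt ((t + x) * (t + y) * (t + z)) * (t + z))"
  let ?g = "\<lambda>t. 1 / (sqrt (t + x) * sqrt (t + z) * (t + z))"
  let ?h = "\<lambda>t. 1 / ((t + z) * sqrt (t + z))"
  have integral: "((\<lambda>t. 1 / sqrt y * ?g t - 1 / y * ?h t) has_integral
                    1 / sqrt y * (2 / (sqrt z * (sqrt x + sqrt z))) - 1 / y * (2 / sqrt z)) {0..}"
    using assms
    by (intro has_integral_diff has_integral_mult_right has_integral_RD_without_y
          has_integral_inverse_pow_three_halves)
  have "1 / sqrt y * ?g t - 1 / y * ?h t \<le> ?f t" if "t \<ge> 0" for t
  proof -
    have "?g t * sqrt t \<le> ?h t"
    proof -
      have "?g t * sqrt t = sqrt t / sqrt (t + x) * ?h t"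
        by (simp add: ac_simps)
      also have "\<dots> \<le> 1 * ?h t"
        using assms that by (intro mult_right_mono) auto
      finally show ?thesis
        by simp
    qed
    then have "1 / y * (?g t * sqrt t) \<le> 1 / y * ?h t"
      using assms by (intro mult_left_mono) auto
    moreover have distrib: "G * (1 / sqrt y - sqrt t / y) = 1 / sqrt y * G - 1 / y * (G * sqrt t)" for G
      by (simp add: right_diff_distrib)
    ultimately have "1 / sqrt y * ?g t - 1 / y * ?h t \<le> ?g t * (1 / sqrt y - sqrt t / y)"
      unfolding distrib by linarith
    also have "\<dots> \<le> ?g t * (1 / sqrt (t + y))"
      using assms that by (intro mult_left_mono inverse_sqrt_add_ge) auto
    also have "\<dots> = ?f t"
      by (simp add: real_sqrt_mult ac_simps)
    finally show ?thesis .
  qed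
  then have "1 / sqrt y * (2 / (sqrt z * (sqrt x + sqrt z))) - 1 / y * (2 / sqrt z) \<le> integral {0..} ?f"
    using integral_le[OF has_integral_integrable[OF integral] RJ_integrable] assms
    unfolding integral_unique[OF integral] by auto
  then show ?thesis
    unfolding RD_def RJ_def by (simp add: field_simps)
qed

section \<open>Degenerations of RF, RJ and RD\<close>

lemma RJ_tendsto_at_top:
  fixes x y z :: real
  assumes "x > 0" "y > 0" "z > 0"
  shows "filterlim (RJ x y z) at_top (at_right 0)"
proof (rule filterlim_at_top_mono)
  define k where "k = 1 / sqrt ((1 + x) * (1 + y) * (1 + z))"
  have "k > 0"
    using assms by (simp add: k_def add_pos_pos)
  then show "filterlim (\<lambda>p. 3 / 2 * (k * (ln (1 + p) - ln p))) at_top (at_right 0)"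
    by real_asymp
  show "\<forall>\<^sub>F p in at_right 0. 3 / 2 * (k * (ln (1 + p) - ln p)) \<le> RJ x y z p"
    using eventually_at_right_less[of 0] by eventually_elim (use assms RJ_ge in \<open>simp add: k_def\<close>)
qed

lemma tendsto_mult_RJ:
  fixes x y z :: real
  assumes "x > 0" "y > 0" "z > 0"
  shows "((\<lambda>p. p * RJ x y z p) \<longlongrightarrow> 0) (at_right 0)"
proof (rule tendsto_sandwich)
  have small: "\<forall>\<^sub>F p in at_right 0. 0 < p \<and> p < z"
    unfolding eventually_at_right_field using assms by (intro exI[of _ z]) auto
  show "\<forall>\<^sub>F p in at_right 0. 0 \<le> p * RJ x y z p"
    using small by eventually_elim (use assms RJ_pos in \<open>simp add: less_imp_le\<close>)
  show "\<forall>\<^sub>F p in at_right 0. p * RJ x y z p \<le> p * (3 / (sqrt x * sqrt y * sqrt p))"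
    using small by eventually_elim (intro mult_left_mono RJ_le, use assms in auto)
  show "((\<lambda>p. p * (3 / (sqrt x * sqrt y * sqrt p))) \<longlongrightarrow> 0) (at_right 0)"
    using assms by real_asymp
qed simp

lemma RF_scaled_tendsto_at_top:
  fixes a y c :: real
  assumes "a > 0" "y > 0" "c > 0"
  shows "filterlim (\<lambda>e. RF (e * a) y (e * c)) at_top (at_right 0)"
proof (rule filterlim_at_top_mono)
  define M where "M = max a c"
  have "M > 0"
    using assms by (simp add: M_def)
  then show "filterlim (\<lambda>e. 1 / 2 * (1 / sqrt (1 + y) * (ln (1 + e * M) - ln (e * M)))) at_top (at_right 0)"
    using assms by real_asymp
  show "\<forall>\<^sub>F e in at_right 0. 1 / 2 * (1 / sqrt (1 + y) * (ln (1 + e * M) - ln (e * M))) \<le> RF (e * a) y (e * c)"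
    using eventually_at_right_less[of 0]
    by eventually_elim (intro RF_ge, use assms in \<open>auto simp: M_def\<close>)
qed

lemma tendsto_mult_RF_scaled:
  fixes a y c :: real
  assumes "a > 0" "y > 0" "c > 0"
  shows "((\<lambda>e. e * RF (e * a) y (e * c)) \<longlongrightarrow> 0) (at_right 0)"
proof (rule tendsto_sandwich)
  define m where "m = min a c"
  have m: "m > 0" "m \<le> a" "m \<le> c"
    using assms by (auto simp: m_def)
  have small: "\<forall>\<^sub>F e in at_right 0. 0 < e \<and> e * m \<le> y"
    unfolding eventually_at_right_field using assms m
    by (intro exI[of _ "y / m"]) (auto simp: field_simps)
  show "\<forall>\<^sub>F e in at_right 0. 0 \<le> e * RF (e * a) y (e * c)"
    using small by eventually_elim (use assms RF_pos in \<open>simp add: less_imp_le\<close>)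
  show "\<forall>\<^sub>F e in at_right 0. e * RF (e * a) y (e * c) \<le> e * (1 / sqrt (e * m))"
    using small by eventually_elim (intro mult_left_mono RF_le, use assms m in auto)
  show "((\<lambda>e. e * (1 / sqrt (e * m))) \<longlongrightarrow> 0) (at_right 0)"
    using m by real_asymp
qed simp

lemma tendsto_mult_RD_scaled:
  fixes a y c :: real
  assumes "a > 0" "y > 0" "c > 0"
  shows "((\<lambda>e. e * RD (e * a) y (e * c)) \<longlongrightarrow> 3 / (sqrt y * sqrt c * (sqrt a + sqrt c))) (at_right 0)"
proof (rule tendsto_sandwich)
  define L where "L = 3 / (sqrt y * sqrt c * (sqrt a + sqrt c))"
  have scale: "e * (3 / (sqrt y * sqrt (e * c) * (sqrt (e * a) + sqrt (e * c)))) = L" if "e > 0" for e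
  proof -
    have "sqrt y * sqrt (e * c) * (sqrt (e * a) + sqrt (e * c))
            = (sqrt e * sqrt e) * (sqrt y * sqrt c * (sqrt a + sqrt c))"
      by (simp add: real_sqrt_mult algebra_simps del: real_sqrt_mult_self)
    also have "sqrt e * sqrt e = e"
      using that by simp
    finally have denominator: "sqrt y * sqrt (e * c) * (sqrt (e * a) + sqrt (e * c))
                                 = e * (sqrt y * sqrt c * (sqrt a + sqrt c))" .
    show ?thesis
      unfolding denominator L_def using that by simp
  qed
  show "\<forall>\<^sub>F e in at_right 0. e * RD (e * a) y (e * c) \<le> L"
    using eventually_at_right_less[of 0]
    by eventually_elim (use assms scale RD_le in \<open>metis mult_left_mono less_imp_le mult_pos_pos\<close>)
  show "\<forall>\<^sub>F e in at_right 0. L - e * (3 / (y * sqrt (e * c))) \<le> e * RD (e * a) y (e * c)"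
    using eventually_at_right_less[of 0]
  proof eventually_elim
    case (elim e)
    have "e * (3 / (sqrt y * sqrt (e * c) * (sqrt (e * a) + sqrt (e * c))) - 3 / (y * sqrt (e * c)))
            \<le> e * RD (e * a) y (e * c)"
      using elim assms by (intro mult_left_mono RD_ge) auto
    then show ?case
      using scale[OF elim] by (simp add: right_diff_distrib)
  qed
  show "((\<lambda>e. L - e * (3 / (y * sqrt (e * c)))) \<longlongrightarrow> L) (at_right 0)"
    using assms by real_asymp
qed simp_all

section \<open>Polynomials in four variables\<close>

lemma eval4_zero [simp]: "eval4 (\<lambda>_. 0) x y z p = 0"
  by (simp add: eval4_def)

lemma eval4_eq_sum:
  assumes "finite S" "{m. P m \<noteq> 0} \<subseteq> S"
  shows "eval4 P x y z p = (\<Sum>m\<in>S. case m of (a, b, d, e) \<Rightarrow> P m * x ^ a * y ^ b * z ^ d * p ^ e)"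
  unfolding eval4_def by (rule sum.mono_neutral_left[OF assms]) auto

definition poly4_in_p :: "poly4 \<Rightarrow> real \<Rightarrow> real \<Rightarrow> real \<Rightarrow> real poly" where
  "poly4_in_p P x y z =
     (\<Sum>m\<in>{m. P m \<noteq> 0}. case m of (a, b, d, e) \<Rightarrow> monom (P m * x ^ a * y ^ b * z ^ d) e)"

definition poly4_in_z :: "poly4 \<Rightarrow> real \<Rightarrow> real \<Rightarrow> real \<Rightarrow> real poly" where
  "poly4_in_z P x y p =
     (\<Sum>m\<in>{m. P m \<noteq> 0}. case m of (a, b, d, e) \<Rightarrow> monom (P m * x ^ a * y ^ b * p ^ e) d)"

lemma poly_poly4_in_p [simp]: "poly (poly4_in_p P x y z) p = eval4 P x y z p"
  unfolding poly4_in_p_def eval4_def poly_sum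
  by (rule sum.cong) (auto simp: poly_monom split: prod.splits)

lemma poly_poly4_in_z [simp]: "poly (poly4_in_z P x y p) z = eval4 P x y z p"
  unfolding poly4_in_z_def eval4_def poly_sum
  by (rule sum.cong) (auto simp: poly_monom split: prod.splits)

text \<open>Kronecker substitution: when all exponents are below D, the substitution
  x = t, y = t^D, z = t^(D^2), p = t^(D^3) sends distinct monomials to distinct powers of t.\<close>

definition kronecker_exponent :: "nat \<Rightarrow> nat \<times> nat \<times> nat \<times> nat \<Rightarrow> nat" where
  "kronecker_exponent D m = (case m of (a, b, d, e) \<Rightarrow> a + D * (b + D * (d + D * e)))"

definition kronecker_poly :: "nat \<Rightarrow> poly4 \<Rightarrow> real poly" where
  "kronecker_poly D P = (\<Sum>m\<in>{m. P m \<noteq> 0}. monom (P m) (kronecker_exponent D m))"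

lemma base_digit_eq_iff:
  fixes D a a' u u' :: nat
  assumes "a < D" "a' < D"
  shows "a + D * u = a' + D * u' \<longleftrightarrow> a = a' \<and> u = u'"
proof
  assume eq: "a + D * u = a' + D * u'"
  have "a = (a + D * u) mod D" "u = (a + D * u) div D"
       "a' = (a' + D * u') mod D" "u' = (a' + D * u') div D"
    using assms by auto
  with eq show "a = a' \<and> u = u'"
    by metis
qed auto

lemma kronecker_exponent_inj:
  assumes "\<forall>i\<in>{a, b, d, e, a', b', d', e'}. i < D"
  shows "kronecker_exponent D (a, b, d, e) = kronecker_exponent D (a', b', d', e') \<longleftrightarrow>
           (a, b, d, e) = (a', b', d', e')"
  using assms by (simp add: kronecker_exponent_def base_digit_eq_iff)

lemma poly_kronecker_poly:
  "poly (kronecker_poly D P) t = eval4 P t (t ^ D) (t ^ (D * D)) (t ^ (D * D * D))"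
  unfolding kronecker_poly_def eval4_def poly_sum
  by (rule sum.cong)
     (auto simp: poly_monom kronecker_exponent_def power_add power_mult[symmetric] algebra_simps)

lemma kronecker_poly_nonzero:
  assumes "is_poly4 P" "P \<noteq> (\<lambda>_. 0)"
    and small: "\<And>a b d e. P (a, b, d, e) \<noteq> 0 \<Longrightarrow> a < D \<and> b < D \<and> d < D \<and> e < D"
  shows "kronecker_poly D P \<noteq> 0"
proof -
  obtain m0 where m0: "P m0 \<noteq> 0"
    using assms(2) by blast
  have "coeff (kronecker_poly D P) (kronecker_exponent D m0)
          = (\<Sum>m\<in>{m. P m \<noteq> 0}. if m = m0 then P m else 0)"
    unfolding kronecker_poly_def coeff_sum coeff_monom
  proof (rule sum.cong)
    fix m
    assume "m \<in> {m. P m \<noteq> 0}"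
    moreover obtain a b d e a' b' d' e' where "m = (a, b, d, e)" "m0 = (a', b', d', e')"
      by (cases m, cases m0) auto
    ultimately have "kronecker_exponent D m = kronecker_exponent D m0 \<longleftrightarrow> m = m0"
      using m0 small[of a b d e] small[of a' b' d' e'] by (simp only:, intro kronecker_exponent_inj) auto
    then show "(if kronecker_exponent D m = kronecker_exponent D m0 then P m else 0)
                 = (if m = m0 then P m else 0)"
      by simp
  qed simp
  also have "\<dots> = P m0"
    using assms(1) m0 by (simp add: is_poly4_def)
  finally show ?thesis
    using m0 by auto
qed

lemma poly4_common_positive_nonroot:
  assumes "finite F" "\<And>P. P \<in> F \<Longrightarrow> is_poly4 P" "\<And>P. P \<in> F \<Longrightarrow> P \<noteq> (\<lambda>_. 0)"
  obtains x y z p :: real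
  where "x > 0" "y > 0" "z > 0" "p > 0" "\<And>P. P \<in> F \<Longrightarrow> eval4 P x y z p \<noteq> 0"
proof -
  define degrees where "degrees = (\<Union>P\<in>F. (\<lambda>(a, b, d, e). a + b + d + e) ` {m. P m \<noteq> 0})"
  have "finite degrees"
    unfolding degrees_def using assms by (auto simp: is_poly4_def)
  then obtain D where D: "\<And>n. n \<in> degrees \<Longrightarrow> n < D"
    by (meson finite_nat_set_iff_bounded)
  have small: "a < D \<and> b < D \<and> d < D \<and> e < D" if "P \<in> F" "P (a, b, d, e) \<noteq> 0" for P a b d e
  proof -
    have "a + b + d + e \<in> degrees"
      unfolding degrees_def using that by force
    then show ?thesis
      using D by fastforce
  qed
  define roots where "roots = (\<Union>P\<in>F. {t. poly (kronecker_poly D P) t = 0})"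
  have "finite roots"
    unfolding roots_def
    by (intro finite_UN_I poly_roots_finite kronecker_poly_nonzero assms(1)) (use assms small in auto)
  then have "infinite ({0<..} - roots)"
    by (intro Diff_infinite_finite infinite_Ioi)
  then obtain t :: real where t: "t \<in> {0<..} - roots"
    using infinite_imp_nonempty by blast
  show ?thesis
    by (rule that[of t "t ^ D" "t ^ (D * D)" "t ^ (D * D * D)"])
       (use t in \<open>auto simp: roots_def poly_kronecker_poly\<close>)
qed

definition ord_xz :: "poly4 \<Rightarrow> nat" where
  "ord_xz P = Min ((\<lambda>(a, b, d, e). a + d) ` {m. P m \<noteq> 0})"

definition low_xz :: "poly4 \<Rightarrow> poly4" where
  "low_xz P = (\<lambda>m. case m of (a, b, d, e) \<Rightarrow> if a + d = ord_xz P then P m else 0)"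

lemma is_poly4_low_xz: "is_poly4 P \<Longrightarrow> is_poly4 (low_xz P)"
  unfolding is_poly4_def
  by (rule finite_subset[rotated]) (auto simp: low_xz_def split: prod.splits if_splits)

lemma low_xz_zero [simp]: "low_xz (\<lambda>_. 0) = (\<lambda>_. 0)"
  by (auto simp: low_xz_def split: prod.splits)

lemma ord_xz_le:
  assumes "is_poly4 P" "P (a, b, d, e) \<noteq> 0"
  shows "ord_xz P \<le> a + d"
proof -
  have "a + d \<in> (\<lambda>(a, b, d, e). a + d) ` {m. P m \<noteq> 0}"
    using assms(2) by force
  then show ?thesis
    using assms(1) by (simp add: ord_xz_def is_poly4_def)
qed

lemma low_xz_nonzero:
  assumes "is_poly4 P" "P \<noteq> (\<lambda>_. 0)"
  shows "low_xz P \<noteq> (\<lambda>_. 0)"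
proof -
  let ?orders = "(\<lambda>(a, b, d, e). a + d) ` {m. P m \<noteq> 0}"
  have "ord_xz P \<in> ?orders"
    unfolding ord_xz_def using assms by (intro Min_in) (auto simp: is_poly4_def)
  then obtain a b d e where "P (a, b, d, e) \<noteq> 0" "a + d = ord_xz P"
    by auto
  then have "low_xz P (a, b, d, e) \<noteq> 0"
    by (simp add: low_xz_def)
  then show ?thesis
    by auto
qed

definition scaled_xz :: "poly4 \<Rightarrow> real \<Rightarrow> real \<Rightarrow> real \<Rightarrow> real \<Rightarrow> real \<Rightarrow> real" where
  "scaled_xz P a y c p e = eval4 P (e * a) y (e * c) p / e ^ ord_xz P"

lemma eval4_eq_scaled_xz:
  "e > 0 \<Longrightarrow> eval4 P (e * a) y (e * c) p = e ^ ord_xz P * scaled_xz P a y c p e"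
  by (simp add: scaled_xz_def)

lemma scaled_xz_zero [simp]: "scaled_xz (\<lambda>_. 0) a y c p = (\<lambda>_. 0)"
  by (simp add: scaled_xz_def fun_eq_iff)

lemma tendsto_scaled_xz:
  assumes "is_poly4 P"
  shows "(scaled_xz P a y c p \<longlongrightarrow> eval4 (low_xz P) a y c p) (at_right 0)"
proof -
  let ?S = "{m. P m \<noteq> 0}"
  define n where "n = ord_xz P"
  define T :: "nat \<times> nat \<times> nat \<times> nat \<Rightarrow> real"
    where "T m = (case m of (i, j, k, l) \<Rightarrow> P m * a ^ i * y ^ j * c ^ k * p ^ l)" for m
  define excess :: "nat \<times> nat \<times> nat \<times> nat \<Rightarrow> nat" where "excess m = (case m of (i, j, k, l) \<Rightarrow> i + k - n)" for m
  have fin: "finite ?S"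
    using assms by (simp add: is_poly4_def)
  have le: "n \<le> i + k" if "(i, j, k, l) \<in> ?S" for i j k l
    using ord_xz_le[OF assms] that by (simp add: n_def)
  have "eval4 (low_xz P) a y c p
          = (\<Sum>m\<in>?S. case m of (i, j, k, l) \<Rightarrow> low_xz P m * a ^ i * y ^ j * c ^ k * p ^ l)"
    by (rule eval4_eq_sum[OF fin]) (auto simp: low_xz_def split: prod.splits if_splits)
  also have "\<dots> = (\<Sum>m\<in>?S. T m * 0 ^ excess m)"
  proof (rule sum.cong)
    fix m
    assume m: "m \<in> ?S"
    obtain i j k l where m_eq: "m = (i, j, k, l)"
      by (cases m) auto
    show "(case m of (i, j, k, l) \<Rightarrow> low_xz P m * a ^ i * y ^ j * c ^ k * p ^ l) = T m * 0 ^ excess m"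
      using le[of i j k l] m by (auto simp: m_eq T_def excess_def low_xz_def n_def)
  qed simp
  finally have limit: "eval4 (low_xz P) a y c p = (\<Sum>m\<in>?S. T m * 0 ^ excess m)" .
  have "eval4 P (e * a) y (e * c) p / e ^ n = (\<Sum>m\<in>?S. T m * e ^ excess m)" if "e > 0" for e
    unfolding eval4_def sum_divide_distrib
  proof (rule sum.cong)
    fix m
    assume m: "m \<in> ?S"
    obtain i j k l where m_eq: "m = (i, j, k, l)"
      by (cases m) auto
    have "e ^ (i + k) = e ^ n * e ^ (i + k - n)"
      using le m m_eq by (simp flip: power_add)
    then show "(case m of (i, j, k, l) \<Rightarrow> P m * (e * a) ^ i * y ^ j * (e * c) ^ k * p ^ l) / e ^ n
                 = T m * e ^ excess m"
      using that by (simp add: m_eq T_def excess_def power_mult_distrib power_add field_simps)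
  qed simp
  then have "\<forall>\<^sub>F e in at_right 0. (\<Sum>m\<in>?S. T m * e ^ excess m) = eval4 P (e * a) y (e * c) p / e ^ n"
    using eventually_at_right_less[of 0] by (auto elim: eventually_mono)
  moreover have "((\<lambda>e. \<Sum>m\<in>?S. T m * e ^ excess m) \<longlongrightarrow> (\<Sum>m\<in>?S. T m * 0 ^ excess m)) (at_right 0)"
    by (intro tendsto_intros)
  ultimately show ?thesis
    unfolding limit n_def scaled_xz_def[abs_def] by (rule Lim_transform_eventually[rotated])
qed

section \<open>Asymptotic comparison at 0\<close>

lemma eventually_poly_nonzero_at_right:
  fixes q :: "real poly"
  assumes "q \<noteq> 0"
  shows "\<forall>\<^sub>F x in at_right a. poly q x \<noteq> 0"
proof -
  have "\<not> a islimpt {x. poly q x = 0}"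
    using islimpt_finite[OF poly_roots_finite[OF assms]] .
  then have "\<forall>\<^sub>F x in at a. poly q x \<noteq> 0"
    by (simp add: islimpt_iff_eventually)
  then show ?thesis
    by (simp add: eventually_at_split)
qed

lemma poly_eq_power_mult_nonroot:
  fixes q :: "real poly"
  assumes "q \<noteq> 0"
  obtains k r where "\<And>x. poly q x = x ^ k * poly r x" "poly r 0 \<noteq> 0"
proof -
  obtain r where r: "q = [:- 0, 1:] ^ order 0 q * r" "\<not> [:- 0, 1:] dvd r"
    using order_decomp[OF assms] by blast
  show ?thesis
  proof (rule that)
    show "poly q x = x ^ order 0 q * poly r x" for x
      by (subst r(1)) simp
    show "poly r 0 \<noteq> 0"
      using r(2) by (simp add: poly_eq_0_iff_dvd)
  qed
qed

lemma not_eventually_poly_mult_eq_poly: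
  fixes f :: "real \<Rightarrow> real" and C R :: "real poly"
  assumes f: "filterlim f at_top (at_right 0)" and pf: "((\<lambda>p. p * f p) \<longlongrightarrow> 0) (at_right 0)"
    and "C \<noteq> 0"
  shows "\<not> (\<forall>\<^sub>F p in at_right 0. poly C p * f p = poly R p)"
proof
  assume eq: "\<forall>\<^sub>F p in at_right 0. poly C p * f p = poly R p"
  have no_limit: "\<not> (f \<longlongrightarrow> L) (at_right 0)" for L
    using not_tendsto_and_filterlim_at_infinity[OF trivial_limit_at_right_real _
            filterlim_at_top_imp_at_infinity[OF f]] by blast
  have "R \<noteq> 0"
  proof
    assume "R = 0"
    have "\<forall>\<^sub>F p in at_right 0. f p = 0"
      using eq eventually_poly_nonzero_at_right[OF \<open>C \<noteq> 0\<close>]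
      by eventually_elim (simp add: \<open>R = 0\<close>)
    then show False
      using no_limit tendsto_eventually by blast
  qed
  obtain k C1 where C1: "\<And>p. poly C p = p ^ k * poly C1 p" "poly C1 0 \<noteq> 0"
    using poly_eq_power_mult_nonroot[OF \<open>C \<noteq> 0\<close>] by blast
  obtain j R1 where R1: "\<And>p. poly R p = p ^ j * poly R1 p" "poly R1 0 \<noteq> 0"
    using poly_eq_power_mult_nonroot[OF \<open>R \<noteq> 0\<close>] by blast
  have C1_nonzero: "\<forall>\<^sub>F p in at_right 0. poly C1 p \<noteq> 0"
    using C1(2) by (intro tendsto_imp_eventually_ne[of "poly C1"]) (auto intro!: tendsto_intros)
  have quotient: "((\<lambda>p. poly R1 p / poly C1 p) \<longlongrightarrow> poly R1 0 / poly C1 0) (at_right 0)"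
    using C1(2) by (intro tendsto_intros) auto
  show False
  proof (cases "k \<le> j")
    case True
    have "\<forall>\<^sub>F p in at_right 0. p ^ (j - k) * (poly R1 p / poly C1 p) = f p"
      using eq C1_nonzero eventually_at_right_less[of 0]
    proof eventually_elim
      case (elim p)
      have "p ^ j = p ^ k * p ^ (j - k)"
        using True by (simp flip: power_add)
      with elim show ?case
        by (simp add: C1 R1 field_simps)
    qed
    with tendsto_mult[OF tendsto_power[OF tendsto_ident_at] quotient, of "j - k"]
    have "(f \<longlongrightarrow> 0 ^ (j - k) * (poly R1 0 / poly C1 0)) (at_right 0)"
      by (rule Lim_transform_eventually)
    with no_limit show False
      by blast
  next
    case False
    have "\<forall>\<^sub>F p in at_right 0. p ^ (k - j - 1) * (p * f p) = poly R1 p / poly C1 p"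
      using eq C1_nonzero eventually_at_right_less[of 0]
    proof eventually_elim
      case (elim p)
      have "p ^ k = p ^ (j + (k - j - 1) + 1)"
        using False by simp
      also have "\<dots> = p ^ j * (p ^ (k - j - 1) * p)"
        by (simp only: power_add power_one_right mult.assoc)
      finally have "p ^ k = p ^ j * (p ^ (k - j - 1) * p)" .
      with elim show ?case
        by (simp add: C1 R1 field_simps)
    qed
    with tendsto_mult[OF tendsto_power[OF tendsto_ident_at] pf, of "k - j - 1"]
    have "((\<lambda>p. poly R1 p / poly C1 p) \<longlongrightarrow> 0 ^ (k - j - 1) * 0) (at_right 0)"
      by (rule Lim_transform_eventually)
    with quotient have "poly R1 0 / poly C1 0 = 0"
      using tendsto_unique[OF trivial_limit_at_right_real] by fastforce
    with R1(2) C1(2) show False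
      by simp
  qed
qed

lemma tendsto_power_diff_mult:
  fixes f :: "real \<Rightarrow> real"
  assumes lim: "(f \<longlongrightarrow> a) (at_right 0)" and order: "f = (\<lambda>_. 0) \<or> k \<le> n"
  shows "((\<lambda>e. e ^ (n - k) * f e) \<longlongrightarrow> (if n = k then a else 0)) (at_right 0)"
proof (cases "f = (\<lambda>_. 0)")
  case True
  then have "a = 0"
    using tendsto_unique[OF trivial_limit_at_right_real lim[unfolded True] tendsto_const] by simp
  with True show ?thesis
    by simp
next
  case False
  with order have "k \<le> n"
    by blast
  show ?thesis
  proof (cases "n = k")
    case True
    with lim show ?thesis
      by simp
  next
    case False
    with \<open>k \<le> n\<close> have "(0::real) ^ (n - k) * a = 0"
      by simp
    with False tendsto_mult[OF tendsto_power[OF tendsto_ident_at] lim, of "n - k"] show ?thesis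
      by simp
  qed
qed

lemma leading_coefficients_cancel:
  fixes f g h :: "real \<Rightarrow> real"
  assumes lim: "(f \<longlongrightarrow> a) (at_right 0)" "(g \<longlongrightarrow> b) (at_right 0)" "(h \<longlongrightarrow> c) (at_right 0)"
    and order: "f = (\<lambda>_. 0) \<or> k \<le> l" "g = (\<lambda>_. 0) \<or> k \<le> m" "h = (\<lambda>_. 0) \<or> k \<le> n"
    and eq: "\<forall>\<^sub>F e in at_right 0. e ^ l * f e + e ^ m * g e + e ^ n * h e = 0"
  shows "(if l = k then a else 0) + (if m = k then b else 0) + (if n = k then c else 0) = 0"
proof -
  have split: "e ^ n * u e = e ^ k * (e ^ (n - k) * u e)"
    if "u = (\<lambda>_. 0) \<or> k \<le> n" for u :: "real \<Rightarrow> real" and e n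
  proof (cases "u = (\<lambda>_. 0)")
    case False
    with that obtain d where "n = k + d"
      using le_Suc_ex by blast
    then show ?thesis
      by (simp add: power_add mult.assoc)
  qed simp
  let ?scaled = "\<lambda>e. e ^ (l - k) * f e + e ^ (m - k) * g e + e ^ (n - k) * h e"
  have "\<forall>\<^sub>F e in at_right 0. ?scaled e = 0"
    using eq eventually_at_right_less[of 0]
  proof eventually_elim
    case (elim e)
    then have "e ^ k * (e ^ (l - k) * f e) + e ^ k * (e ^ (m - k) * g e) + e ^ k * (e ^ (n - k) * h e) = 0"
      by (simp only: split[OF order(1)] split[OF order(2)] split[OF order(3)])
    then have "e ^ k * ?scaled e = 0"
      by (simp only: distrib_left)
    with elim(2) show ?case
      by simp
  qed
  then have "(?scaled \<longlongrightarrow> 0) (at_right 0)"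
    by (rule tendsto_eventually)
  moreover have "(?scaled \<longlongrightarrow> (if l = k then a else 0) + (if m = k then b else 0) + (if n = k then c else 0))
                   (at_right 0)"
    by (intro tendsto_add tendsto_power_diff_mult lim order)
  ultimately show ?thesis
    by (simp add: tendsto_unique[OF trivial_limit_at_right_real])
qed

lemma log_term_not_leading:
  fixes wA wB wD F D :: "real \<Rightarrow> real"
  assumes lim: "(wA \<longlongrightarrow> lA) (at_right 0)" "(wB \<longlongrightarrow> lB) (at_right 0)" "(wD \<longlongrightarrow> lD) (at_right 0)"
    and "lA \<noteq> 0"
    and order: "wB = (\<lambda>_. 0) \<or> NA < NB" "wD = (\<lambda>_. 0) \<or> NA < ND"
    and F: "filterlim F at_top (at_right 0)" and D: "((\<lambda>e. e * D e) \<longlongrightarrow> LD) (at_right 0)"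
    and eq: "\<forall>\<^sub>F e in at_right 0. e ^ NA * wA e * F e + e ^ NB * wB e * D e + e ^ ND * wD e / (e * K) = 0"
  shows False
proof -
  have shift: "e ^ N * u = e ^ (N - 1) * (e * u)" if "NA < N \<or> u = 0" for e u :: real and N
    using that by (cases N) auto
  have "\<forall>\<^sub>F e in at_right 0. e ^ NA * wA e + e ^ (NB - 1) * (wB e * (e * D e) * inverse (F e))
                              + e ^ (ND - 1) * (wD e * inverse K * inverse (F e)) = 0"
    using eq eventually_at_right_less[of 0] F[unfolded filterlim_at_top_dense, rule_format, of 0]
  proof eventually_elim
    case (elim e)
    have B: "e ^ NB * wB e * D e = e ^ (NB - 1) * (wB e * (e * D e))"
      using shift[of NB "wB e * D e" e] order(1) by auto
    have D: "e ^ ND * wD e / (e * K) = e ^ (ND - 1) * (wD e * inverse K)"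
      using shift[of ND "wD e / (e * K)" e] order(2) elim(2) by (auto simp: field_simps)
    have "F e \<noteq> 0"
      using elim(3) by simp
    then have cancel_F: "(u + e ^ m * (v * inverse (F e)) + e ^ n * (w * inverse (F e))) * F e
                           = u * F e + e ^ m * v + e ^ n * w" for u v w m n
      by (simp add: field_simps)
    have "(e ^ NA * wA e + e ^ (NB - 1) * (wB e * (e * D e) * inverse (F e))
            + e ^ (ND - 1) * (wD e * inverse K * inverse (F e))) * F e
          = e ^ NA * wA e * F e + e ^ (NB - 1) * (wB e * (e * D e)) + e ^ (ND - 1) * (wD e * inverse K)"
      by (rule cancel_F)
    also have "\<dots> = 0"
      using elim(1) unfolding B D .
    finally show ?case
      using \<open>F e \<noteq> 0\<close> by simp
  qed
  moreover have "(\<lambda>e. wB e * (e * D e) * inverse (F e)) = (\<lambda>_. 0) \<or> NA \<le> NB - 1"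
    "(\<lambda>e. wD e * inverse K * inverse (F e)) = (\<lambda>_. 0) \<or> NA \<le> ND - 1"
    using order by auto
  ultimately have "lA + (if NB - 1 = NA then lB * LD * 0 else 0) + (if ND - 1 = NA then lD * inverse K * 0 else 0) = 0"
    using leading_coefficients_cancel[OF lim(1)
        tendsto_mult[OF tendsto_mult[OF lim(2) D] tendsto_inverse_0_at_top[OF F]]
        tendsto_mult[OF tendsto_mult[OF lim(3) tendsto_const] tendsto_inverse_0_at_top[OF F]]
        disjI2[OF order_refl]]
    by simp
  with \<open>lA \<noteq> 0\<close> show False
    by (auto split: if_splits)
qed

text \<open>The logarithmic term can never be the dominant one, so the two simple-pole terms have to
  cancel at the lowest order in e.\<close>

lemma pole_coefficients_cancel:
  fixes wA wB wD F D :: "real \<Rightarrow> real"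
  assumes lim: "(wA \<longlongrightarrow> lA) (at_right 0)" "(wB \<longlongrightarrow> lB) (at_right 0)" "(wD \<longlongrightarrow> lD) (at_right 0)"
    and vanish: "lA = 0 \<Longrightarrow> wA = (\<lambda>_. 0)" "lB = 0 \<Longrightarrow> wB = (\<lambda>_. 0)" "lD = 0 \<Longrightarrow> wD = (\<lambda>_. 0)"
    and F: "filterlim F at_top (at_right 0)" "((\<lambda>e. e * F e) \<longlongrightarrow> 0) (at_right 0)"
    and D: "((\<lambda>e. e * D e) \<longlongrightarrow> LD) (at_right 0)" "LD \<noteq> 0"
    and K: "K \<noteq> 0"
    and eq: "\<forall>\<^sub>F e in at_right 0. e ^ NA * wA e * F e + e ^ NB * wB e * D e + e ^ ND * wD e / (e * K) = 0"
    and nontrivial: "lB \<noteq> 0 \<or> lD \<noteq> 0"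
  shows "lD \<noteq> 0 \<and> lB * LD + lD / K = 0"
proof -
  define M where "M = (if lB \<noteq> 0 \<and> lD \<noteq> 0 then min NB ND else if lB \<noteq> 0 then NB else ND)"
  have MB: "lB \<noteq> 0 \<Longrightarrow> M \<le> NB" and MD: "lD \<noteq> 0 \<Longrightarrow> M \<le> ND"
    by (auto simp: M_def)
  have A_not_leading: "M \<le> NA" if "lA \<noteq> 0"
  proof (rule ccontr)
    assume "\<not> M \<le> NA"
    then have "wB = (\<lambda>_. 0) \<or> NA < NB" "wD = (\<lambda>_. 0) \<or> NA < ND"
      using vanish(2,3) MB MD by (cases "lB = 0"; cases "lD = 0"; auto)+
    from log_term_not_leading[OF lim that this F(1) D(1) eq] show False .
  qed
  have "\<forall>\<^sub>F e in at_right 0. e ^ NA * (wA e * (e * F e)) + e ^ NB * (wB e * (e * D e)) + e ^ ND * (wD e / K) = 0"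
    using eq eventually_at_right_less[of 0]
  proof eventually_elim
    case (elim e)
    have "e ^ NA * (wA e * (e * F e)) + e ^ NB * (wB e * (e * D e)) + e ^ ND * (wD e / K)
            = e * (e ^ NA * wA e * F e + e ^ NB * wB e * D e + e ^ ND * wD e / (e * K))"
      using elim(2) K by (simp add: field_simps)
    with elim(1) show ?case
      by simp
  qed
  from leading_coefficients_cancel[OF tendsto_mult[OF lim(1) F(2)] tendsto_mult[OF lim(2) D(1)]
      tendsto_divide[OF lim(3) tendsto_const K] _ _ _ this, of M]
  have "(if NA = M then lA * 0 else 0) + (if NB = M then lB * LD else 0) + (if ND = M then lD / K else 0) = 0"
    using vanish A_not_leading MB MD by (cases "lA = 0"; cases "lB = 0"; cases "lD = 0") auto
  then show ?thesis
    using nontrivial D(2) K by (auto simp: M_def split: if_splits)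
qed

lemma X_mult_square_neq_smult_square:
  fixes U W :: "real poly"
  assumes "U \<noteq> 0" "a \<noteq> 0"
  shows "[:0, 1:] * U ^ 2 \<noteq> smult a (W ^ 2)"
proof
  assume eq: "[:0, 1:] * U ^ 2 = smult a (W ^ 2)"
  have odd: "degree ([:0, 1:] * U ^ 2) = 1 + 2 * degree U"
    using assms(1) by (simp add: degree_mult_eq degree_power_eq)
  show False
  proof (cases "W = 0")
    case True
    with eq assms(1) show False
      by simp
  next
    case False
    then have "degree (smult a (W ^ 2)) = 2 * degree W"
      using assms(2) by (simp add: degree_power_eq)
    with eq odd have "1 + 2 * degree U = 2 * degree W"
      by simp
    then show False
      by presburger
  qed
qed

lemma squared_leading_relation:
  fixes a y c u v :: real
  assumes "a > 0" "y > 0" "c > 0"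
    and rel: "u * (3 / (sqrt y * sqrt c * (sqrt a + sqrt c))) + v / sqrt (a * y * c) = 0"
  shows "c * v ^ 2 = a * (3 * u + v) ^ 2"
proof -
  have cross: "3 * u * D2 + v * D1 = 0" if "D1 \<noteq> 0" "D2 \<noteq> 0" "u * (3 / D1) + v / D2 = 0" for D1 D2 :: real
    using that by (simp add: field_simps)
  have "sqrt (a * y * c) = sqrt a * sqrt y * sqrt c"
    by (simp add: real_sqrt_mult)
  moreover have "sqrt a + sqrt c > 0"
    using assms by (simp add: add_pos_pos)
  ultimately have "3 * u * (sqrt a * sqrt y * sqrt c) + v * (sqrt y * sqrt c * (sqrt a + sqrt c)) = 0"
    using assms by (intro cross) auto
  then have "sqrt y * sqrt c * (3 * u * sqrt a + v * (sqrt a + sqrt c)) = 0"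
    by algebra
  with assms have "3 * u * sqrt a + v * (sqrt a + sqrt c) = 0"
    by simp
  then have "v * sqrt c = - (sqrt a * (3 * u + v))"
    by algebra
  then have "(v * sqrt c) ^ 2 = (sqrt a * (3 * u + v)) ^ 2"
    by simp
  with assms have "v ^ 2 * c = a * (3 * u + v) ^ 2"
    by (simp add: power_mult_distrib)
  then show ?thesis
    by (simp add: ac_simps)
qed

lemma clear_denominators:
  fixes pa pb pc pd qa qb qc qd F D J S :: real
  assumes "qa \<noteq> 0" "qb \<noteq> 0" "qc \<noteq> 0" "qd \<noteq> 0"
    and "pa / qa * F + pb / qb * D + pc / qc * J + pd / qd * S = 0"
  shows "pa * qb * qc * qd * F + pb * qa * qc * qd * D + pc * qa * qb * qd * J + pd * qa * qb * qc * S = 0"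
proof -
  have "qa * qb * qc * qd * (pa / qa * F + pb / qb * D + pc / qc * J + pd / qd * S) = 0"
    using assms(5) by simp
  moreover have "qa * qb * qc * qd * (pa / qa * F) = pa * qb * qc * qd * F"
    "qa * qb * qc * qd * (pb / qb * D) = pb * qa * qc * qd * D"
    "qa * qb * qc * qd * (pc / qc * J) = pc * qa * qb * qd * J"
    "qa * qb * qc * qd * (pd / qd * S) = pd * qa * qb * qc * S"
    using assms(1-4) by (simp_all add: field_simps)
  ultimately show ?thesis
    by (simp only: distrib_left)
qed

locale carlson_relation =
  fixes Pa Qa Pb Qb Pc Qc Pd Qd :: poly4
  assumes polys: "is_poly4 Pa" "is_poly4 Qa" "is_poly4 Pb" "is_poly4 Qb"
                 "is_poly4 Pc" "is_poly4 Qc" "is_poly4 Pd" "is_poly4 Qd"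
    and denoms: "Qa \<noteq> (\<lambda>_. 0)" "Qb \<noteq> (\<lambda>_. 0)" "Qc \<noteq> (\<lambda>_. 0)" "Qd \<noteq> (\<lambda>_. 0)"
    and ident: "\<And>x y z p. x > 0 \<Longrightarrow> y > 0 \<Longrightarrow> z > 0 \<Longrightarrow> p > 0 \<Longrightarrow>
        eval4 Qa x y z p \<noteq> 0 \<Longrightarrow> eval4 Qb x y z p \<noteq> 0 \<Longrightarrow>
        eval4 Qc x y z p \<noteq> 0 \<Longrightarrow> eval4 Qd x y z p \<noteq> 0 \<Longrightarrow>
        rat4 Pa Qa x y z p * RF x y z + rat4 Pb Qb x y z p * RD x y z
        + rat4 Pc Qc x y z p * RJ x y z p + rat4 Pd Qd x y z p / sqrt (x * y * z) = 0"
begin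

lemma cleared_identity:
  assumes "x > 0" "y > 0" "z > 0" "p > 0"
    and "\<And>Q. Q \<in> {Qa, Qb, Qc, Qd} \<Longrightarrow> eval4 Q x y z p \<noteq> 0"
  shows "eval4 Pa x y z p * eval4 Qb x y z p * eval4 Qc x y z p * eval4 Qd x y z p * RF x y z
       + eval4 Pb x y z p * eval4 Qa x y z p * eval4 Qc x y z p * eval4 Qd x y z p * RD x y z
       + eval4 Pc x y z p * eval4 Qa x y z p * eval4 Qb x y z p * eval4 Qd x y z p * RJ x y z p
       + eval4 Pd x y z p * eval4 Qa x y z p * eval4 Qb x y z p * eval4 Qc x y z p
         * (1 / sqrt (x * y * z)) = 0"
  using assms ident[OF assms(1-4)] by (intro clear_denominators) (auto simp: rat4_def)

lemma Pc_zero: "Pc = (\<lambda>_. 0)"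
proof (rule ccontr)
  assume "Pc \<noteq> (\<lambda>_. 0)"
  obtain x0 y0 z0 p0 :: real where pt: "x0 > 0" "y0 > 0" "z0 > 0" "p0 > 0"
    and nonroot: "\<And>P. P \<in> {Pc, Qa, Qb, Qc, Qd} \<Longrightarrow> eval4 P x0 y0 z0 p0 \<noteq> 0"
    by (rule poly4_common_positive_nonroot[of "{Pc, Qa, Qb, Qc, Qd}"])
       (use polys denoms \<open>Pc \<noteq> (\<lambda>_. 0)\<close> in auto)
  let ?q = "\<lambda>P. poly4_in_p P x0 y0 z0"
  have q_nonzero: "?q P \<noteq> 0" if "P \<in> {Pc, Qa, Qb, Qc, Qd}" for P
    using nonroot[OF that] by (metis poly_0 poly_poly4_in_p)
  define C where "C = ?q Pc * ?q Qa * ?q Qb * ?q Qd"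
  define R where "R = - (smult (RF x0 y0 z0) (?q Pa * ?q Qb * ?q Qc * ?q Qd)
                       + smult (RD x0 y0 z0) (?q Pb * ?q Qa * ?q Qc * ?q Qd)
                       + smult (1 / sqrt (x0 * y0 * z0)) (?q Pd * ?q Qa * ?q Qb * ?q Qc))"
  have "C \<noteq> 0"
    using q_nonzero by (simp add: C_def)
  moreover have "\<forall>\<^sub>F p in at_right 0. \<forall>Q\<in>{Qa, Qb, Qc, Qd}. eval4 Q x0 y0 z0 p \<noteq> 0"
  proof (intro eventually_ball_finite ballI)
    fix Q
    assume "Q \<in> {Qa, Qb, Qc, Qd}"
    then show "\<forall>\<^sub>F p in at_right 0. eval4 Q x0 y0 z0 p \<noteq> 0"
      using eventually_poly_nonzero_at_right[OF q_nonzero[of Q]] by simp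
  qed simp
  then have "\<forall>\<^sub>F p in at_right 0. poly C p * RJ x0 y0 z0 p = poly R p"
    using eventually_at_right_less[of 0]
  proof eventually_elim
    case (elim p)
    with pt cleared_identity[of x0 y0 z0 p] show ?case
      by (simp add: C_def R_def algebra_simps)
  qed
  ultimately show False
    using not_eventually_poly_mult_eq_poly[OF RJ_tendsto_at_top[OF pt(1-3)] tendsto_mult_RJ[OF pt(1-3)]]
    by blast
qed

lemma scaled_cleared_identity:
  assumes pt: "a > 0" "y > 0" "c > 0" "p > 0"
    and low_Q: "\<And>Q. Q \<in> {Qa, Qb, Qc, Qd} \<Longrightarrow> eval4 (low_xz Q) a y c p \<noteq> 0"
  shows "\<forall>\<^sub>F e in at_right 0.
      e ^ (ord_xz Pa + ord_xz Qb + ord_xz Qc + ord_xz Qd)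
        * (scaled_xz Pa a y c p e * scaled_xz Qb a y c p e * scaled_xz Qc a y c p e * scaled_xz Qd a y c p e)
        * RF (e * a) y (e * c)
    + e ^ (ord_xz Pb + ord_xz Qa + ord_xz Qc + ord_xz Qd)
        * (scaled_xz Pb a y c p e * scaled_xz Qa a y c p e * scaled_xz Qc a y c p e * scaled_xz Qd a y c p e)
        * RD (e * a) y (e * c)
    + e ^ (ord_xz Pd + ord_xz Qa + ord_xz Qb + ord_xz Qc)
        * (scaled_xz Pd a y c p e * scaled_xz Qa a y c p e * scaled_xz Qb a y c p e * scaled_xz Qc a y c p e)
        / (e * sqrt (a * y * c)) = 0"
proof -
  have "\<forall>\<^sub>F e in at_right 0. \<forall>Q\<in>{Qa, Qb, Qc, Qd}. scaled_xz Q a y c p e \<noteq> 0"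
  proof (intro eventually_ball_finite ballI)
    fix Q
    assume "Q \<in> {Qa, Qb, Qc, Qd}"
    with polys low_Q show "\<forall>\<^sub>F e in at_right 0. scaled_xz Q a y c p e \<noteq> 0"
      by (intro tendsto_imp_eventually_ne[OF tendsto_scaled_xz]) auto
  qed simp
  then show ?thesis
    using eventually_at_right_less[of 0]
  proof eventually_elim
    case (elim e)
    have sqrt_eq: "sqrt (e * a * y * (e * c)) = e * sqrt (a * y * c)"
      using elim(2) by (simp add: real_sqrt_mult ac_simps)
    have "eval4 Q (e * a) y (e * c) p \<noteq> 0" if "Q \<in> {Qa, Qb, Qc, Qd}" for Q
      using elim that by (auto simp: eval4_eq_scaled_xz)
    from cleared_identity[OF _ pt(2) _ pt(4) this] pt elim(2) show ?case
      unfolding eval4_eq_scaled_xz[OF elim(2)] sqrt_eq by (simp add: Pc_zero power_add algebra_simps)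
  qed
qed

lemma low_xz_relation:
  assumes nontrivial: "Pb \<noteq> (\<lambda>_. 0) \<or> Pd \<noteq> (\<lambda>_. 0)"
    and pt: "a > 0" "y > 0" "c > 0" "p > 0"
    and generic: "\<And>P. P \<in> {Pa, Pb, Pd, Qa, Qb, Qc, Qd} \<Longrightarrow> P \<noteq> (\<lambda>_. 0) \<Longrightarrow>
                    eval4 (low_xz P) a y c p \<noteq> 0"
  defines "l \<equiv> \<lambda>P. eval4 (low_xz P) a y c p"
  shows "Pd \<noteq> (\<lambda>_. 0) \<and>
    c * (l Pd * l Qa * l Qb * l Qc) ^ 2 = a * (3 * (l Pb * l Qa * l Qc * l Qd) + l Pd * l Qa * l Qb * l Qc) ^ 2"
proof -
  let ?s = "\<lambda>P. scaled_xz P a y c p"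
  have l_Q: "l Q \<noteq> 0" if "Q \<in> {Qa, Qb, Qc, Qd}" for Q
    using generic[of Q] that denoms by (auto simp: l_def)
  have lim: "(?s P \<longlongrightarrow> l P) (at_right 0)" if "P \<in> {Pa, Pb, Pd, Qa, Qb, Qc, Qd}" for P
    using polys that unfolding l_def by (intro tendsto_scaled_xz) auto
  have vanish: "?s P = (\<lambda>_. 0)" if "l P = 0" "P \<in> {Pa, Pb, Pd}" for P
  proof -
    have "P = (\<lambda>_. 0)"
      using generic[of P] that by (auto simp: l_def)
    then show ?thesis
      by simp
  qed
  have "l Pd * l Qa * l Qb * l Qc \<noteq> 0 \<and>
    l Pb * l Qa * l Qc * l Qd * (3 / (sqrt y * sqrt c * (sqrt a + sqrt c)))
      + l Pd * l Qa * l Qb * l Qc / sqrt (a * y * c) = 0"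
  proof (rule pole_coefficients_cancel)
    show "((\<lambda>e. ?s Pa e * ?s Qb e * ?s Qc e * ?s Qd e) \<longlongrightarrow> l Pa * l Qb * l Qc * l Qd) (at_right 0)"
      "((\<lambda>e. ?s Pb e * ?s Qa e * ?s Qc e * ?s Qd e) \<longlongrightarrow> l Pb * l Qa * l Qc * l Qd) (at_right 0)"
      "((\<lambda>e. ?s Pd e * ?s Qa e * ?s Qb e * ?s Qc e) \<longlongrightarrow> l Pd * l Qa * l Qb * l Qc) (at_right 0)"
      by (intro tendsto_mult lim; simp)+
    show "(\<lambda>e. ?s Pa e * ?s Qb e * ?s Qc e * ?s Qd e) = (\<lambda>_. 0)" if "l Pa * l Qb * l Qc * l Qd = 0"
      using that l_Q vanish[of Pa] by auto
    show "(\<lambda>e. ?s Pb e * ?s Qa e * ?s Qc e * ?s Qd e) = (\<lambda>_. 0)" if "l Pb * l Qa * l Qc * l Qd = 0"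
      using that l_Q vanish[of Pb] by auto
    show "(\<lambda>e. ?s Pd e * ?s Qa e * ?s Qb e * ?s Qc e) = (\<lambda>_. 0)" if "l Pd * l Qa * l Qb * l Qc = 0"
      using that l_Q vanish[of Pd] by auto
    show "l Pb * l Qa * l Qc * l Qd \<noteq> 0 \<or> l Pd * l Qa * l Qb * l Qc \<noteq> 0"
      using nontrivial generic[of Pb] generic[of Pd] l_Q by (auto simp: l_def)
    show "3 / (sqrt y * sqrt c * (sqrt a + sqrt c)) \<noteq> 0" "sqrt (a * y * c) \<noteq> 0"
      using pt add_pos_pos[of "sqrt a" "sqrt c"] by auto
  qed (use pt scaled_cleared_identity[OF pt] l_Q in \<open>auto simp: l_def intro: RF_scaled_tendsto_at_top
         tendsto_mult_RF_scaled tendsto_mult_RD_scaled\<close>)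
  then show ?thesis
    using squared_leading_relation[OF pt(1-3)] by (auto simp: l_def)
qed

lemma eventually_low_xz_nonroot:
  obtains a0 y0 p0 :: real where "a0 > 0" "y0 > 0" "p0 > 0"
    "\<forall>\<^sub>F c in at_right 0. c > 0 \<and>
       (\<forall>P\<in>{Pa, Pb, Pd, Qa, Qb, Qc, Qd}. P \<noteq> (\<lambda>_. 0) \<longrightarrow> eval4 (low_xz P) a0 y0 c p0 \<noteq> 0)"
proof -
  define G where "G = {P \<in> {Pa, Pb, Pd, Qa, Qb, Qc, Qd}. P \<noteq> (\<lambda>_. 0)}"
  have G: "finite G" "\<And>P. P \<in> G \<Longrightarrow> is_poly4 P \<and> P \<noteq> (\<lambda>_. 0)"
    using polys by (auto simp: G_def)
  obtain a0 y0 c0 p0 :: real where pt: "a0 > 0" "y0 > 0" "c0 > 0" "p0 > 0"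
    and nonroot: "\<And>P. P \<in> low_xz ` G \<Longrightarrow> eval4 P a0 y0 c0 p0 \<noteq> 0"
    by (rule poly4_common_positive_nonroot[of "low_xz ` G"])
       (use G is_poly4_low_xz low_xz_nonzero in auto)
  have "poly4_in_z (low_xz P) a0 y0 p0 \<noteq> 0" if "P \<in> G" for P
  proof
    assume "poly4_in_z (low_xz P) a0 y0 p0 = 0"
    then have "eval4 (low_xz P) a0 y0 c0 p0 = 0"
      using poly_poly4_in_z[of "low_xz P" a0 y0 p0 c0] by simp
    with nonroot that show False
      by blast
  qed
  then have "\<forall>\<^sub>F c in at_right 0. \<forall>P\<in>G. eval4 (low_xz P) a0 y0 c p0 \<noteq> 0"
    using eventually_poly_nonzero_at_right by (intro eventually_ball_finite G(1)) fastforce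
  then have "\<forall>\<^sub>F c in at_right 0. c > 0 \<and>
      (\<forall>P\<in>{Pa, Pb, Pd, Qa, Qb, Qc, Qd}. P \<noteq> (\<lambda>_. 0) \<longrightarrow> eval4 (low_xz P) a0 y0 c p0 \<noteq> 0)"
    using eventually_at_right_less[of 0] by eventually_elim (auto simp: G_def)
  with pt show ?thesis
    using that by blast
qed

lemma Pb_Pd_zero: "Pb = (\<lambda>_. 0) \<and> Pd = (\<lambda>_. 0)"
proof (rule ccontr)
  assume "\<not> (Pb = (\<lambda>_. 0) \<and> Pd = (\<lambda>_. 0))"
  then have nontrivial: "Pb \<noteq> (\<lambda>_. 0) \<or> Pd \<noteq> (\<lambda>_. 0)"
    by blast
  obtain a0 y0 p0 :: real where pt: "a0 > 0" "y0 > 0" "p0 > 0"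
    and generic: "\<forall>\<^sub>F c in at_right 0. c > 0 \<and>
      (\<forall>P\<in>{Pa, Pb, Pd, Qa, Qb, Qc, Qd}. P \<noteq> (\<lambda>_. 0) \<longrightarrow> eval4 (low_xz P) a0 y0 c p0 \<noteq> 0)"
    by (rule eventually_low_xz_nonroot)
  let ?z = "\<lambda>P. poly4_in_z (low_xz P) a0 y0 p0"
  define lB where "lB c = eval4 (low_xz Pb) a0 y0 c p0 * eval4 (low_xz Qa) a0 y0 c p0
                          * eval4 (low_xz Qc) a0 y0 c p0 * eval4 (low_xz Qd) a0 y0 c p0" for c
  define lD where "lD c = eval4 (low_xz Pd) a0 y0 c p0 * eval4 (low_xz Qa) a0 y0 c p0
                          * eval4 (low_xz Qb) a0 y0 c p0 * eval4 (low_xz Qc) a0 y0 c p0" for c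
  define U where "U = ?z Pd * ?z Qa * ?z Qb * ?z Qc"
  define W where "W = smult 3 (?z Pb * ?z Qa * ?z Qc * ?z Qd) + U"
  have poly_U: "poly U c = lD c" and poly_W: "poly W c = 3 * lB c + lD c" for c
    by (simp_all add: U_def W_def lB_def lD_def)
  have relation: "lD c \<noteq> 0 \<and> c * lD c ^ 2 = a0 * (3 * lB c + lD c) ^ 2"
    if "c > 0 \<and> (\<forall>P\<in>{Pa, Pb, Pd, Qa, Qb, Qc, Qd}. P \<noteq> (\<lambda>_. 0) \<longrightarrow> eval4 (low_xz P) a0 y0 c p0 \<noteq> 0)"
    for c
  proof -
    from that have "c > 0"
      by blast
    from that have nonroot: "\<And>P. P \<in> {Pa, Pb, Pd, Qa, Qb, Qc, Qd} \<Longrightarrow> P \<noteq> (\<lambda>_. 0) \<Longrightarrow>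
                               eval4 (low_xz P) a0 y0 c p0 \<noteq> 0"
      by blast
    from low_xz_relation[OF nontrivial pt(1,2) \<open>c > 0\<close> pt(3) nonroot]
    have "Pd \<noteq> (\<lambda>_. 0)" "c * lD c ^ 2 = a0 * (3 * lB c + lD c) ^ 2"
      unfolding lB_def lD_def by simp_all
    moreover from nonroot \<open>Pd \<noteq> (\<lambda>_. 0)\<close> denoms have "lD c \<noteq> 0"
      unfolding lD_def by simp
    ultimately show ?thesis
      by blast
  qed
  obtain c0 where "c0 > 0 \<and> (\<forall>P\<in>{Pa, Pb, Pd, Qa, Qb, Qc, Qd}. P \<noteq> (\<lambda>_. 0) \<longrightarrow> eval4 (low_xz P) a0 y0 c0 p0 \<noteq> 0)"
    using eventually_happens[OF generic] trivial_limit_at_right_real by blast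
  from relation[OF this] have "poly U c0 \<noteq> 0"
    by (simp add: poly_U)
  then have "U \<noteq> 0"
    by auto
  then have "[:0, 1:] * U ^ 2 - smult a0 (W ^ 2) \<noteq> 0"
    using X_mult_square_neq_smult_square pt(1) by auto
  from eventually_poly_nonzero_at_right[OF this]
  have "\<forall>\<^sub>F c in at_right 0. poly ([:0, 1:] * U ^ 2 - smult a0 (W ^ 2)) c \<noteq> 0" .
  moreover have "\<forall>\<^sub>F c in at_right 0. poly ([:0, 1:] * U ^ 2 - smult a0 (W ^ 2)) c = 0"
    using generic
  proof eventually_elim
    case (elim c)
    from relation[OF elim] show ?case
      by (simp add: poly_U poly_W)
  qed
  ultimately have "\<forall>\<^sub>F c in at_right 0. poly ([:0, 1:] * U ^ 2 - smult a0 (W ^ 2)) c \<noteq> 0 \<and>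
                                       poly ([:0, 1:] * U ^ 2 - smult a0 (W ^ 2)) c = 0"
    by (rule eventually_conj)
  then show False
    using eventually_happens[of _ "at_right (0::real)"] by (auto simp: trivial_limit_at_right_real)
qed

lemma Pa_zero: "Pa = (\<lambda>_. 0)"
proof (rule ccontr)
  assume "Pa \<noteq> (\<lambda>_. 0)"
  obtain x y z p :: real where pt: "x > 0" "y > 0" "z > 0" "p > 0"
    and nonroot: "\<And>P. P \<in> {Pa, Qa, Qb, Qc, Qd} \<Longrightarrow> eval4 P x y z p \<noteq> 0"
    by (rule poly4_common_positive_nonroot[of "{Pa, Qa, Qb, Qc, Qd}"])
       (use polys denoms \<open>Pa \<noteq> (\<lambda>_. 0)\<close> in auto)
  then have "eval4 Q x y z p \<noteq> 0" if "Q \<in> {Qa, Qb, Qc, Qd}" for Q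
    using that by auto
  from cleared_identity[OF pt this] nonroot RF_pos[OF pt(1-3)] show False
    by (simp add: Pb_Pd_zero Pc_zero)
qed

end

theorem theorem1:
  fixes Pa Qa Pb Qb Pc Qc Pd Qd :: poly4
  assumes polys: "is_poly4 Pa" "is_poly4 Qa" "is_poly4 Pb" "is_poly4 Qb"
                 "is_poly4 Pc" "is_poly4 Qc" "is_poly4 Pd" "is_poly4 Qd"
    and denoms: "Qa \<noteq> (\<lambda>_. 0)" "Qb \<noteq> (\<lambda>_. 0)" "Qc \<noteq> (\<lambda>_. 0)" "Qd \<noteq> (\<lambda>_. 0)"
    and ident: "\<And>x y z p. x > 0 \<Longrightarrow> y > 0 \<Longrightarrow> z > 0 \<Longrightarrow> p > 0 \<Longrightarrow>
        eval4 Qa x y z p \<noteq> 0 \<Longrightarrow> eval4 Qb x y z p \<noteq> 0 \<Longrightarrow>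
        eval4 Qc x y z p \<noteq> 0 \<Longrightarrow> eval4 Qd x y z p \<noteq> 0 \<Longrightarrow>
        rat4 Pa Qa x y z p * RF x y z + rat4 Pb Qb x y z p * RD x y z
        + rat4 Pc Qc x y z p * RJ x y z p + rat4 Pd Qd x y z p / sqrt (x * y * z) = 0"
  shows "Pa = (\<lambda>_. 0) \<and> Pb = (\<lambda>_. 0) \<and> Pc = (\<lambda>_. 0) \<and> Pd = (\<lambda>_. 0)"
proof -
  interpret carlson_relation Pa Qa Pb Qb Pc Qc Pd Qd
    by (rule carlson_relation.intro) (fact polys denoms ident)+
  show ?thesis
    using Pa_zero Pb_Pd_zero Pc_zero by blast
qed

end
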